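(* Let $\Omega\subset\mathbb{R}^n$ be a bounded Lipschitz domain, $T>0$, $\Omega_T=(0,T]\times\Omega$, $W$ a Hilbert space of measurable functions on $\Omega_T$ continuously embedded in $L^2(0,T;L^2(\Omega))$, $y_0\in L^2(\Omega)$, and $S:L^2(0,T;\mathbb{R}^2)\to W$ a continuous affine map with $\|S(u)\|_W\le C(\|u\|_{L^2(0,T;\mathbb{R}^2)}+\|y_0\|_{L^2(\Omega)})$ for a constant $C$ independent of $u,y_0$; let $S_0$ be its linear part (the map $S$ with $y_0=0$) and $\|S_0\|$ its operator norm from $L^2(0,T;\mathbb{R}^2)$ to $L^2(0,T;L^2(\omega_{\mathrm{obs}}))$, where $\omega_{\mathrm{obs}}\subset\Omega$. Let $y^d\in L^2(0,T;L^2(\omega_{\mathrm{obs}}))$, $\alpha>0$, and let $\mathcal{U}$ be the space of $\mathbb{R}^2$-valued functions on $[0,T]$ that are piecewise constant on a given grid $0=t_1<\dots<t_M=T$. Let $\beta>\|S_0\|^2+\alpha$ and let $\bar u\in\mathcal{U}$ be a local minimizer over $\mathcal{U}$ of $$J_\beta(u)=\frac12\|Su-y^d\|^2_{L^2(0,T;L^2(\omega_{\mathrm{obs}}))}+\frac\alpha2\|u\|^2_{L^2(0,T;\mathbb{R}^2)}+\beta\int_0^T|u_1(t)u_2(t)|\,dt.$$ Then $\bar u_1(t)\bar u_2(t)=0$ for all $t\in[0,T]$.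
   Context: $Su=S(u)$ is the state for control $u=(u_1,u_2)$, restricted to $(0,T)\times\omega_{\mathrm{obs}}$ in the tracking term. Piecewise constant means constant on each interval $(t_j,t_{j+1}]$. *)

theory Defs
  imports "HOL-Analysis.Analysis"
begin

definition L2ctrl :: "real \<Rightarrow> (real \<Rightarrow> real \<times> real) set" where
  "L2ctrl T = {u. u \<in> borel_measurable lborel \<and>
                  set_integrable lborel {0..T} (\<lambda>t. (norm (u t))\<^sup>2)}"

definition ctrl_norm :: "real \<Rightarrow> (real \<Rightarrow> real \<times> real) \<Rightarrow> real" where
  "ctrl_norm T u = sqrt (LINT t:{0..T}|lborel. (norm (u t))\<^sup>2)"

definition obs_set :: "real \<Rightarrow> (real^'n::finite) set \<Rightarrow> (real \<times> (real^'n)) set" where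
  "obs_set T \<omega> = {0<..<T} \<times> \<omega>"

definition L2obs :: "real \<Rightarrow> (real^'n::finite) set \<Rightarrow> (real \<times> (real^'n) \<Rightarrow> real) set" where
  "L2obs T \<omega> = {y. y \<in> borel_measurable lborel \<and>
                    set_integrable lborel (obs_set T \<omega>) (\<lambda>z. (y z)\<^sup>2)}"

definition obs_norm :: "real \<Rightarrow> (real^'n::finite) set \<Rightarrow> (real \<times> (real^'n) \<Rightarrow> real) \<Rightarrow> real" where
  "obs_norm T \<omega> y = sqrt (LINT z:obs_set T \<omega>|lborel. (y z)\<^sup>2)"

definition lin_part :: "((real \<Rightarrow> real \<times> real) \<Rightarrow> (real \<times> (real^'n::finite) \<Rightarrow> real))
     \<Rightarrow> (real \<Rightarrow> real \<times> real) \<Rightarrow> (real \<times> (real^'n) \<Rightarrow> real)" where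
  "lin_part S u = (\<lambda>z. S u z - S (\<lambda>_. 0) z)"

definition op_norm :: "real \<Rightarrow> (real^'n::finite) set
     \<Rightarrow> ((real \<Rightarrow> real \<times> real) \<Rightarrow> (real \<times> (real^'n) \<Rightarrow> real)) \<Rightarrow> real" where
  "op_norm T \<omega> S0 = Sup {obs_norm T \<omega> (S0 u) / ctrl_norm T u | u. u \<in> L2ctrl T \<and> ctrl_norm T u \<noteq> 0}"

definition pwc :: "(nat \<Rightarrow> real) \<Rightarrow> nat \<Rightarrow> (real \<Rightarrow> real \<times> real) set" where
  "pwc tg M = {u. \<exists>c :: nat \<Rightarrow> real \<times> real.
      u = (\<lambda>t. \<Sum>j\<in>{1..<M}. indicator {tg j<..tg (Suc j)} t *\<^sub>R c j)}"

definition J_beta :: "real \<Rightarrow> (real^'n::finite) set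
     \<Rightarrow> ((real \<Rightarrow> real \<times> real) \<Rightarrow> (real \<times> (real^'n) \<Rightarrow> real)) \<Rightarrow> (real \<times> (real^'n) \<Rightarrow> real)
     \<Rightarrow> real \<Rightarrow> real \<Rightarrow> (real \<Rightarrow> real \<times> real) \<Rightarrow> real" where
  "J_beta T \<omega> S yd \<alpha> \<beta> u =
     1/2 * (obs_norm T \<omega> (\<lambda>z. S u z - yd z))\<^sup>2
     + \<alpha>/2 * (ctrl_norm T u)\<^sup>2
     + \<beta> * (LINT t:{0..T}|lborel. \<bar>fst (u t) * snd (u t)\<bar>)"

definition local_min_on :: "real \<Rightarrow> ((real \<Rightarrow> real \<times> real) \<Rightarrow> real) \<Rightarrow> (real \<Rightarrow> real \<times> real) set
     \<Rightarrow> (real \<Rightarrow> real \<times> real) \<Rightarrow> bool" where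
  "local_min_on T F A x \<longleftrightarrow> x \<in> A \<and>
     (\<exists>\<epsilon>>0. \<forall>u\<in>A. ctrl_norm T (\<lambda>t. u t - x t) < \<epsilon> \<longrightarrow> F x \<le> F u)"

end

theory Submission
  imports Defs
begin

text \<open>If \<open>ubar t\<close> has two nonzero components, then \<open>ubar = (a, b)\<close> with \<open>a b \<noteq> 0\<close> on a whole grid
  cell. Perturb \<open>ubar\<close> by \<open>\<plusminus>s w\<close>, where \<open>w\<close> is the indicator of that cell times \<open>(1, - sgn (a b))\<close>.
  The quadratic part of \<open>J\<^sub>\<beta>\<close> obeys the parallelogram law, so averaged over the two perturbations it
  grows by \<open>s\<^sup>2 (\<parallel>S\<^sub>0 w\<parallel>\<^sup>2 + \<alpha> \<parallel>w\<parallel>\<^sup>2) \<le> s\<^sup>2 (\<parallel>S\<^sub>0\<parallel>\<^sup>2 + \<alpha>) \<parallel>w\<parallel>\<^sup>2\<close>, whereas for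
  \<open>s < min \<bar>a\<bar> \<bar>b\<bar>\<close> the products keep their signs and the penalty drops on average by exactly
  \<open>\<beta> s\<^sup>2 \<parallel>w\<parallel>\<^sup>2\<close>. As \<open>\<beta> > \<parallel>S\<^sub>0\<parallel>\<^sup>2 + \<alpha>\<close>, one of the two perturbations lowers \<open>J\<^sub>\<beta>\<close>.\<close>

abbreviation grid_cell :: "(nat \<Rightarrow> real) \<Rightarrow> nat \<Rightarrow> real set" where
  "grid_cell tg j \<equiv> {tg j<..tg (Suc j)}"

lemma pwc_lincomb:
  assumes "u \<in> pwc tg M" "v \<in> pwc tg M"
  shows "(\<lambda>t. a *\<^sub>R u t + b *\<^sub>R v t) \<in> pwc tg M"
proof -
  obtain c d where
    c: "u = (\<lambda>t. \<Sum>j\<in>{1..<M}. indicator (grid_cell tg j) t *\<^sub>R c j)" and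
    d: "v = (\<lambda>t. \<Sum>j\<in>{1..<M}. indicator (grid_cell tg j) t *\<^sub>R d j)"
    using assms unfolding pwc_def by blast
  have "(\<lambda>t. a *\<^sub>R u t + b *\<^sub>R v t)
      = (\<lambda>t. \<Sum>j\<in>{1..<M}. indicator (grid_cell tg j) t *\<^sub>R (a *\<^sub>R c j + b *\<^sub>R d j))"
    unfolding c d by (simp only: scaleR_sum_right scaleR_add_right sum.distrib scaleR_scaleR mult.commute)
  then show ?thesis unfolding pwc_def mem_Collect_eq by (rule exI[where x="\<lambda>j. a *\<^sub>R c j + b *\<^sub>R d j"])
qed

lemma pwc_cell_indicator:
  assumes "j \<in> {1..<M}"
  shows "(\<lambda>t. indicator (grid_cell tg j) t *\<^sub>R e) \<in> pwc tg M"
proof -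
  have "(\<lambda>t. indicator (grid_cell tg j) t *\<^sub>R e)
      = (\<lambda>t. \<Sum>i\<in>{1..<M}. indicator (grid_cell tg i) t *\<^sub>R (if i = j then e else 0))"
    using assms by (simp add: if_distrib[of "\<lambda>x. _ *\<^sub>R x"] sum.delta cong: if_cong)
  then show ?thesis unfolding pwc_def mem_Collect_eq by (rule exI[where x="\<lambda>i. if i = j then e else 0"])
qed

lemma pwc_borel_measurable:
  assumes "u \<in> pwc tg M"
  shows "u \<in> borel_measurable lborel"
proof -
  obtain c where c: "u = (\<lambda>t. \<Sum>j\<in>{1..<M}. indicator (grid_cell tg j) t *\<^sub>R c j)"
    using assms unfolding pwc_def by blast
  show ?thesis unfolding c
    by (intro borel_measurable_sum borel_measurable_scaleR borel_measurable_indicator borel_measurable_const) simp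
qed

lemma pwc_bounded:
  assumes "u \<in> pwc tg M"
  obtains B where "\<And>t. norm (u t) \<le> B"
proof -
  obtain c where c: "u = (\<lambda>t. \<Sum>j\<in>{1..<M}. indicator (grid_cell tg j) t *\<^sub>R c j)"
    using assms unfolding pwc_def by blast
  have "norm (u t) \<le> (\<Sum>j\<in>{1..<M}. norm (c j))" for t
    unfolding c by (rule order_trans[OF norm_sum sum_mono]) (simp add: indicator_def)
  then show ?thesis using that by blast
qed

lemma set_integrable_Icc_bounded:
  fixes f :: "real \<Rightarrow> real"
  assumes "f \<in> borel_measurable lborel" "\<And>t. \<bar>f t\<bar> \<le> B"
  shows "set_integrable lborel {a..b} f"
  unfolding set_integrable_def
  using assms by (intro integrableI_bounded_set_indicator[where B=B]) (auto simp: emeasure_lborel_Icc_eq)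

lemma pwc_set_integrable:
  fixes g :: "real \<times> real \<Rightarrow> real"
  assumes "u \<in> pwc tg M" "continuous_on UNIV g"
  shows "set_integrable lborel {a..b} (\<lambda>t. g (u t))"
proof -
  obtain B where B: "\<And>t. norm (u t) \<le> B" using pwc_bounded[OF assms(1)] by metis
  have "compact (g ` cball 0 B)"
    by (rule compact_continuous_image[OF continuous_on_subset[OF assms(2)]]) auto
  then obtain K where K: "\<forall>y\<in>g ` cball 0 B. norm y \<le> K"
    using compact_imp_bounded bounded_iff by blast
  show ?thesis
  proof (rule set_integrable_Icc_bounded)
    show "(\<lambda>t. g (u t)) \<in> borel_measurable lborel"
      by (rule measurable_compose[OF pwc_borel_measurable[OF assms(1)] borel_measurable_continuous_onI[OF assms(2)]])
    show "\<bar>g (u t)\<bar> \<le> K" for t using K B[of t] by simp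
  qed
qed

lemma pwc_in_L2ctrl:
  assumes "u \<in> pwc tg M"
  shows "u \<in> L2ctrl T"
  unfolding L2ctrl_def
  using pwc_borel_measurable[OF assms] pwc_set_integrable[OF assms, of "\<lambda>x. (norm x)\<^sup>2"]
  by (auto intro: continuous_intros)

lemma set_integral_square_nonneg: "0 \<le> (LINT x:A|M. (f x)\<^sup>2 :: real)"
  unfolding set_lebesgue_integral_def by (rule Bochner_Integration.integral_nonneg) simp

lemma ctrl_norm_nonneg: "0 \<le> ctrl_norm T u"
  unfolding ctrl_norm_def by (simp add: set_integral_square_nonneg)

lemma ctrl_norm_square: "(ctrl_norm T u)\<^sup>2 = (LINT t:{0..T}|lborel. (norm (u t))\<^sup>2)"
  unfolding ctrl_norm_def by (simp add: set_integral_square_nonneg)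

lemma ctrl_norm_scaleR: "ctrl_norm T (\<lambda>t. c *\<^sub>R u t) = \<bar>c\<bar> * ctrl_norm T u"
  unfolding ctrl_norm_def by (simp add: power_mult_distrib real_sqrt_mult)

lemma obs_norm_nonneg: "0 \<le> obs_norm T \<omega> y"
  unfolding obs_norm_def by (simp add: set_integral_square_nonneg)

lemma obs_norm_square: "(obs_norm T \<omega> y)\<^sup>2 = (LINT z:obs_set T \<omega>|lborel. (y z)\<^sup>2)"
  unfolding obs_norm_def by (simp add: set_integral_square_nonneg)

context
  fixes tg :: "nat \<Rightarrow> real" and M :: nat
  assumes grid_step: "\<And>j. 1 \<le> j \<Longrightarrow> j < M \<Longrightarrow> tg j < tg (Suc j)"
begin

lemma grid_mono:
  assumes "1 \<le> i" "i \<le> k" "k \<le> M"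
  shows "tg i \<le> tg k"
  using assms(2,3)
proof (induction k rule: dec_induct)
  case (step k)
  then show ?case using grid_step[of k] assms(1) by fastforce
qed simp

lemma grid_cells_disjoint:
  assumes "i \<in> {1..<M}" "j \<in> {1..<M}" "t \<in> grid_cell tg i" "t \<in> grid_cell tg j"
  shows "i = j"
proof (rule ccontr)
  assume "i \<noteq> j"
  then consider "Suc i \<le> j" | "Suc j \<le> i" by linarith
  then show False
  proof cases
    case 1
    then show False using grid_mono[of "Suc i" j] assms by auto
  next
    case 2
    then show False using grid_mono[of "Suc j" i] assms by auto
  qed
qed

lemma grid_cell_subset:
  assumes "tg 1 = 0" "tg M = T" "j \<in> {1..<M}"
  shows "grid_cell tg j \<subseteq> {0..T}"
  using grid_mono[of 1 j] grid_mono[of "Suc j" M] assms by (simp add: subset_eq)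

lemma pwc_eval_cell:
  fixes c :: "nat \<Rightarrow> real \<times> real"
  assumes "j \<in> {1..<M}" "t \<in> grid_cell tg j"
  shows "(\<Sum>i\<in>{1..<M}. indicator (grid_cell tg i) t *\<^sub>R c i) = c j"
proof -
  have "(\<Sum>i\<in>{1..<M}. indicator (grid_cell tg i) t *\<^sub>R c i) = (\<Sum>i\<in>{1..<M}. if i = j then c j else 0)"
  proof (rule sum.cong)
    fix i assume "i \<in> {1..<M}"
    then have "i \<noteq> j \<Longrightarrow> t \<notin> grid_cell tg i"
      using grid_cells_disjoint[of i j t] assms by blast
    then show "indicator (grid_cell tg i) t *\<^sub>R c i = (if i = j then c j else 0)"
      using assms(2) by (cases "i = j") auto
  qed simp
  then show ?thesis using assms(1) by simp
qed

lemma pwc_constant_on_cell: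
  assumes "u \<in> pwc tg M" "u t \<noteq> 0"
  shows "\<exists>j\<in>{1..<M}. t \<in> grid_cell tg j \<and> (\<forall>t'\<in>grid_cell tg j. u t' = u t)"
proof -
  obtain c where c: "u = (\<lambda>t. \<Sum>i\<in>{1..<M}. indicator (grid_cell tg i) t *\<^sub>R c i)"
    using assms(1) unfolding pwc_def by blast
  have "\<exists>j\<in>{1..<M}. t \<in> grid_cell tg j"
  proof (rule ccontr)
    assume "\<not> ?thesis"
    then have "u t = 0" unfolding c by (intro sum.neutral) auto
    then show False using assms(2) by blast
  qed
  then obtain j where j: "j \<in> {1..<M}" "t \<in> grid_cell tg j" ..
  have "\<forall>t'\<in>grid_cell tg j. u t' = c j"
    using pwc_eval_cell[OF j(1)] unfolding c by blast
  then show ?thesis using j by auto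
qed

lemma ctrl_norm_cell_indicator:
  assumes "tg 1 = 0" "tg M = T" "j \<in> {1..<M}"
  shows "(ctrl_norm T (\<lambda>t. indicator (grid_cell tg j) t *\<^sub>R e))\<^sup>2 = (norm e)\<^sup>2 * (tg (Suc j) - tg j)"
proof -
  have "(LINT t:{0..T}|lborel. indicator (grid_cell tg j) t :: real) = integral\<^sup>L lborel (indicator (grid_cell tg j))"
    unfolding set_lebesgue_integral_def using grid_cell_subset[OF assms]
    by (intro Bochner_Integration.integral_cong) (auto simp: indicator_def)
  also have "\<dots> = tg (Suc j) - tg j" using grid_step[of j] assms(3) by simp
  finally have "(LINT t:{0..T}|lborel. indicator (grid_cell tg j) t :: real) = tg (Suc j) - tg j" .
  moreover have "(norm (indicator (grid_cell tg j) t *\<^sub>R e))\<^sup>2 = (norm e)\<^sup>2 * indicator (grid_cell tg j) t" for t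
    by (simp add: indicator_def)
  ultimately show ?thesis by (simp add: ctrl_norm_square)
qed

end

lemma obs_set_sets: "\<omega> \<in> sets lborel \<Longrightarrow> obs_set T \<omega> \<in> sets lborel"
  unfolding obs_set_def
  by (metis borel_prod pair_measureI sets_lborel borel_open open_greaterThanLessThan)

lemma L2obs_borel_measurable: "y \<in> L2obs T \<omega> \<Longrightarrow> y \<in> borel_measurable lborel"
  unfolding L2obs_def by blast

lemma L2obs_lincomb:
  assumes "f \<in> L2obs T \<omega>" "g \<in> L2obs T \<omega>" "\<omega> \<in> sets lborel"
  shows "(\<lambda>z. a * f z + b * g z) \<in> L2obs T \<omega>"
proof -
  have [measurable]: "f \<in> borel_measurable lborel" "g \<in> borel_measurable lborel"
    "obs_set T \<omega> \<in> sets lborel"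
    using assms obs_set_sets unfolding L2obs_def by auto
  have "set_integrable lborel (obs_set T \<omega>) (\<lambda>z. (a * f z + b * g z)\<^sup>2)"
  proof (rule set_integrable_bound)
    show "set_integrable lborel (obs_set T \<omega>) (\<lambda>z. 2 * a\<^sup>2 * (f z)\<^sup>2 + 2 * b\<^sup>2 * (g z)\<^sup>2)"
      using assms unfolding L2obs_def by auto
    show "set_borel_measurable lborel (obs_set T \<omega>) (\<lambda>z. (a * f z + b * g z)\<^sup>2)"
      unfolding set_borel_measurable_def by measurable
    have "(a * x + b * y)\<^sup>2 \<le> 2 * a\<^sup>2 * x\<^sup>2 + 2 * b\<^sup>2 * y\<^sup>2" for x y :: real
      using zero_le_power2[of "a * x - b * y"] by (simp add: power2_eq_square algebra_simps)
    then show "AE z in lborel. z \<in> obs_set T \<omega> \<longrightarrow>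
        norm ((a * f z + b * g z)\<^sup>2) \<le> norm (2 * a\<^sup>2 * (f z)\<^sup>2 + 2 * b\<^sup>2 * (g z)\<^sup>2)"
      by (auto intro!: AE_I2)
  qed
  then show ?thesis unfolding L2obs_def by simp
qed

lemma obs_norm_cong_AE:
  assumes "\<omega> \<in> sets lborel" "f \<in> borel_measurable lborel" "g \<in> borel_measurable lborel"
    and "AE z in lborel. z \<in> obs_set T \<omega> \<longrightarrow> f z = g z"
  shows "obs_norm T \<omega> f = obs_norm T \<omega> g"
  unfolding obs_norm_def using assms obs_set_sets[OF assms(1)]
  by (subst set_lebesgue_integral_cong_AE[where g="\<lambda>z. (g z)\<^sup>2"]) (auto elim: AE_mp)

lemma obs_norm_parallelogram:
  assumes "f \<in> L2obs T \<omega>" "h \<in> L2obs T \<omega>" "\<omega> \<in> sets lborel"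
  shows "(obs_norm T \<omega> (\<lambda>z. f z + s * h z))\<^sup>2 + (obs_norm T \<omega> (\<lambda>z. f z - s * h z))\<^sup>2
       = 2 * (obs_norm T \<omega> f)\<^sup>2 + 2 * s\<^sup>2 * (obs_norm T \<omega> h)\<^sup>2"
proof -
  have int: "set_integrable lborel (obs_set T \<omega>) (\<lambda>z. (y z)\<^sup>2)" if "y \<in> L2obs T \<omega>" for y
    using that unfolding L2obs_def by blast
  have "(\<lambda>z. 1 * f z + s * h z) \<in> L2obs T \<omega>" "(\<lambda>z. 1 * f z + (- s) * h z) \<in> L2obs T \<omega>"
    using assms by (blast intro: L2obs_lincomb)+
  then have "set_integrable lborel (obs_set T \<omega>) (\<lambda>z. (f z + s * h z)\<^sup>2)"
      "set_integrable lborel (obs_set T \<omega>) (\<lambda>z. (f z - s * h z)\<^sup>2)"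
    by (auto dest!: int)
  then have "(LINT z:obs_set T \<omega>|lborel. (f z + s * h z)\<^sup>2) + (LINT z:obs_set T \<omega>|lborel. (f z - s * h z)\<^sup>2)
      = (LINT z:obs_set T \<omega>|lborel. 2 * (f z)\<^sup>2 + 2 * s\<^sup>2 * (h z)\<^sup>2)"
    by (simp add: set_integral_add(2)[symmetric] power2_eq_square algebra_simps)
  also have "\<dots> = 2 * (LINT z:obs_set T \<omega>|lborel. (f z)\<^sup>2) + 2 * s\<^sup>2 * (LINT z:obs_set T \<omega>|lborel. (h z)\<^sup>2)"
    using int[OF assms(1)] int[OF assms(2)] by (simp add: set_integral_add(2))
  finally show ?thesis by (simp add: obs_norm_square)
qed

lemma norm_parallelogram_scaleR:
  fixes x y :: "'a::real_inner"
  shows "(norm (x + s *\<^sub>R y))\<^sup>2 + (norm (x - s *\<^sub>R y))\<^sup>2 = 2 * (norm x)\<^sup>2 + 2 * s\<^sup>2 * (norm y)\<^sup>2"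
  by (simp only: power2_norm_eq_inner)
    (simp add: inner_add_left inner_add_right inner_diff_left inner_diff_right inner_commute
      algebra_simps power2_eq_square)

lemma ctrl_norm_parallelogram:
  assumes "u \<in> pwc tg M" "w \<in> pwc tg M"
  shows "(ctrl_norm T (\<lambda>t. u t + s *\<^sub>R w t))\<^sup>2 + (ctrl_norm T (\<lambda>t. u t - s *\<^sub>R w t))\<^sup>2
       = 2 * (ctrl_norm T u)\<^sup>2 + 2 * s\<^sup>2 * (ctrl_norm T w)\<^sup>2"
proof -
  have int: "set_integrable lborel {0..T} (\<lambda>t. (norm (v t))\<^sup>2)" if "v \<in> pwc tg M" for v
    using pwc_set_integrable[OF that, of "\<lambda>x. (norm x)\<^sup>2"] by (auto intro: continuous_intros)
  have "(\<lambda>t. 1 *\<^sub>R u t + s *\<^sub>R w t) \<in> pwc tg M" "(\<lambda>t. 1 *\<^sub>R u t + (- s) *\<^sub>R w t) \<in> pwc tg M"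
    using assms by (blast intro: pwc_lincomb)+
  then have "set_integrable lborel {0..T} (\<lambda>t. (norm (u t + s *\<^sub>R w t))\<^sup>2)"
      "set_integrable lborel {0..T} (\<lambda>t. (norm (u t - s *\<^sub>R w t))\<^sup>2)"
    by (auto dest!: int)
  then have "(LINT t:{0..T}|lborel. (norm (u t + s *\<^sub>R w t))\<^sup>2) + (LINT t:{0..T}|lborel. (norm (u t - s *\<^sub>R w t))\<^sup>2)
      = (LINT t:{0..T}|lborel. 2 * (norm (u t))\<^sup>2 + 2 * s\<^sup>2 * (norm (w t))\<^sup>2)"
    by (simp add: set_integral_add(2)[symmetric] norm_parallelogram_scaleR)
  also have "\<dots> = 2 * (LINT t:{0..T}|lborel. (norm (u t))\<^sup>2) + 2 * s\<^sup>2 * (LINT t:{0..T}|lborel. (norm (w t))\<^sup>2)"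
    using int[OF assms(1)] int[OF assms(2)] by (simp add: set_integral_add(2))
  finally show ?thesis by (simp add: ctrl_norm_square)
qed

lemma obs_norm_le_op_norm:
  assumes "\<exists>C. \<forall>u\<in>L2ctrl T. obs_norm T \<omega> (S0 u) \<le> C * ctrl_norm T u" "u \<in> L2ctrl T"
  shows "obs_norm T \<omega> (S0 u) \<le> op_norm T \<omega> S0 * ctrl_norm T u"
proof -
  obtain C where C: "\<forall>u\<in>L2ctrl T. obs_norm T \<omega> (S0 u) \<le> C * ctrl_norm T u"
    using assms(1) by blast
  show ?thesis
  proof (cases "ctrl_norm T u = 0")
    case True
    then show ?thesis using C assms(2) by auto
  next
    case False
    then have pos: "0 < ctrl_norm T u" using ctrl_norm_nonneg[of T u] by linarith
    have "bdd_above {obs_norm T \<omega> (S0 v) / ctrl_norm T v | v. v \<in> L2ctrl T \<and> ctrl_norm T v \<noteq> 0}"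
    proof (rule bdd_aboveI)
      fix x assume "x \<in> {obs_norm T \<omega> (S0 v) / ctrl_norm T v | v. v \<in> L2ctrl T \<and> ctrl_norm T v \<noteq> 0}"
      then obtain v where "v \<in> L2ctrl T" "0 < ctrl_norm T v" "x = obs_norm T \<omega> (S0 v) / ctrl_norm T v"
        using ctrl_norm_nonneg[of T] by (auto simp: order_le_less)
      then show "x \<le> C" using C by (simp add: divide_le_eq)
    qed
    then have "obs_norm T \<omega> (S0 u) / ctrl_norm T u \<le> op_norm T \<omega> S0"
      unfolding op_norm_def using assms(2) False by (intro cSup_upper) auto
    then show ?thesis using pos by (simp add: divide_le_eq)
  qed
qed

lemma abs_mult_perturbation:
  fixes a b s :: real
  assumes "0 \<le> s" "s < \<bar>a\<bar>" "s < \<bar>b\<bar>"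
  shows "\<bar>(a + s) * (b - sgn (a * b) * s)\<bar> + \<bar>(a - s) * (b + sgn (a * b) * s)\<bar> = 2 * \<bar>a * b\<bar> - 2 * s\<^sup>2"
proof -
  have "a \<noteq> 0" "b \<noteq> 0" using assms by auto
  have "\<bar>a + s\<bar> * \<bar>b - sgn (a * b) * s\<bar> + \<bar>a - s\<bar> * \<bar>b + sgn (a * b) * s\<bar>
      = (\<bar>a\<bar> + sgn a * s) * (\<bar>b\<bar> - sgn a * s) + (\<bar>a\<bar> - sgn a * s) * (\<bar>b\<bar> + sgn a * s)"
    using assms \<open>a \<noteq> 0\<close> \<open>b \<noteq> 0\<close> by (cases "a > 0"; cases "b > 0") (auto simp: sgn_mult abs_if algebra_simps)
  also have "\<dots> = 2 * \<bar>a * b\<bar> - 2 * s\<^sup>2"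
    using \<open>a \<noteq> 0\<close> by (simp add: abs_mult sgn_if power2_eq_square algebra_simps)
  finally show ?thesis by (simp add: abs_mult)
qed

definition product_penalty :: "real \<Rightarrow> (real \<Rightarrow> real \<times> real) \<Rightarrow> real" where
  "product_penalty T u = (LINT t:{0..T}|lborel. \<bar>fst (u t) * snd (u t)\<bar>)"

lemma product_penalty_perturbation:
  assumes u: "u \<in> pwc tg M" "\<forall>t\<in>grid_cell tg j. u t = (a, b)" and j: "j \<in> {1..<M}"
    and s: "0 \<le> s" "s < \<bar>a\<bar>" "s < \<bar>b\<bar>"
  defines "w \<equiv> \<lambda>t. indicator (grid_cell tg j) t *\<^sub>R (1, - sgn (a * b))"
  shows "product_penalty T (\<lambda>t. u t + s *\<^sub>R w t) + product_penalty T (\<lambda>t. u t - s *\<^sub>R w t)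
       = 2 * product_penalty T u - s\<^sup>2 * (ctrl_norm T w)\<^sup>2"
proof -
  have w: "w \<in> pwc tg M" unfolding w_def using j by (rule pwc_cell_indicator)
  have int: "set_integrable lborel {0..T} (\<lambda>t. \<bar>fst (v t) * snd (v t)\<bar>)" if "v \<in> pwc tg M" for v
    by (rule pwc_set_integrable[OF that]) (intro continuous_intros)
  have "(\<lambda>t. 1 *\<^sub>R u t + s *\<^sub>R w t) \<in> pwc tg M" "(\<lambda>t. 1 *\<^sub>R u t + (- s) *\<^sub>R w t) \<in> pwc tg M"
    using u(1) w by (blast intro: pwc_lincomb)+
  then have int_pm: "set_integrable lborel {0..T} (\<lambda>t. \<bar>fst (u t + s *\<^sub>R w t) * snd (u t + s *\<^sub>R w t)\<bar>)"
      "set_integrable lborel {0..T} (\<lambda>t. \<bar>fst (u t - s *\<^sub>R w t) * snd (u t - s *\<^sub>R w t)\<bar>)"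
    by (auto dest!: int)
  have "a \<noteq> 0" "b \<noteq> 0" using s by auto
  then have pointwise: "\<bar>fst (u t + s *\<^sub>R w t) * snd (u t + s *\<^sub>R w t)\<bar> + \<bar>fst (u t - s *\<^sub>R w t) * snd (u t - s *\<^sub>R w t)\<bar>
      = 2 * \<bar>fst (u t) * snd (u t)\<bar> - s\<^sup>2 * (norm (w t))\<^sup>2" for t
    using abs_mult_perturbation[OF s] u(2)
    by (cases "t \<in> grid_cell tg j") (simp_all add: w_def norm_Pair sgn_mult abs_mult algebra_simps)
  have "product_penalty T (\<lambda>t. u t + s *\<^sub>R w t) + product_penalty T (\<lambda>t. u t - s *\<^sub>R w t)
      = (LINT t:{0..T}|lborel. \<bar>fst (u t + s *\<^sub>R w t) * snd (u t + s *\<^sub>R w t)\<bar>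
           + \<bar>fst (u t - s *\<^sub>R w t) * snd (u t - s *\<^sub>R w t)\<bar>)"
    unfolding product_penalty_def by (rule set_integral_add(2)[symmetric, OF int_pm])
  also have "\<dots> = (LINT t:{0..T}|lborel. 2 * \<bar>fst (u t) * snd (u t)\<bar> - s\<^sup>2 * (norm (w t))\<^sup>2)"
    unfolding pointwise ..
  also have "\<dots> = 2 * product_penalty T u - s\<^sup>2 * (ctrl_norm T w)\<^sup>2"
  proof -
    have "set_integrable lborel {0..T} (\<lambda>t. (norm (w t))\<^sup>2)"
      by (rule pwc_set_integrable[OF w]) (intro continuous_intros)
    then show ?thesis unfolding product_penalty_def ctrl_norm_square
      using int[OF u(1)] by (simp add: set_integral_diff(2))
  qed
  finally show ?thesis .
qed

lemma local_min_on_pwc_perturbation: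
  assumes "local_min_on T F (pwc tg M) x" "w \<in> pwc tg M"
  obtains \<delta> where "\<delta> > 0" "\<And>r. \<bar>r\<bar> < \<delta> \<Longrightarrow> F x \<le> F (\<lambda>t. x t + r *\<^sub>R w t)"
proof -
  obtain \<epsilon> where x: "x \<in> pwc tg M" and "\<epsilon> > 0"
    and min: "\<And>u. u \<in> pwc tg M \<Longrightarrow> ctrl_norm T (\<lambda>t. u t - x t) < \<epsilon> \<Longrightarrow> F x \<le> F u"
    using assms(1) unfolding local_min_on_def by blast
  have "F x \<le> F (\<lambda>t. x t + r *\<^sub>R w t)" if r: "\<bar>r\<bar> < \<epsilon> / (ctrl_norm T w + 1)" for r
  proof (rule min)
    show "(\<lambda>t. x t + r *\<^sub>R w t) \<in> pwc tg M" using pwc_lincomb[OF x assms(2), of 1 r] by simp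
    have "\<bar>r\<bar> * ctrl_norm T w \<le> \<bar>r\<bar> * (ctrl_norm T w + 1)" by (intro mult_left_mono) auto
    also have "\<dots> < \<epsilon>" using r ctrl_norm_nonneg[of T w] by (simp add: pos_less_divide_eq)
    finally show "ctrl_norm T (\<lambda>t. (x t + r *\<^sub>R w t) - x t) < \<epsilon>"
      using ctrl_norm_scaleR[of T r w] by simp
  qed
  moreover have "\<epsilon> / (ctrl_norm T w + 1) > 0" using \<open>\<epsilon> > 0\<close> ctrl_norm_nonneg[of T w] by simp
  ultimately show ?thesis using that by blast
qed

locale affine_control_to_state =
  fixes T :: real and \<omega> :: "(real^'n::finite) set"
    and S :: "(real \<Rightarrow> real \<times> real) \<Rightarrow> (real \<times> (real^'n) \<Rightarrow> real)"
  assumes \<omega>: "\<omega> \<in> sets lborel"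
    and S_L2: "\<And>u. u \<in> L2ctrl T \<Longrightarrow> S u \<in> L2obs T \<omega>"
    and S_affine: "\<And>u v a. u \<in> L2ctrl T \<Longrightarrow> v \<in> L2ctrl T \<Longrightarrow>
      AE z in lborel. z \<in> obs_set T \<omega> \<longrightarrow>
        S (\<lambda>t. a *\<^sub>R u t + (1 - a) *\<^sub>R v t) z = a * S u z + (1 - a) * S v z"
begin

lemma state_perturbation:
  assumes "u \<in> pwc tg M" "w \<in> pwc tg M"
  shows "AE z in lborel. z \<in> obs_set T \<omega> \<longrightarrow> S (\<lambda>t. u t + s *\<^sub>R w t) z = S u z + s * lin_part S w z"
proof -
  define v where "v = (\<lambda>t. u t + w t)"
  have "v \<in> pwc tg M" "(\<lambda>_. 0) \<in> pwc tg M"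
    using pwc_lincomb[OF assms(1,2), of 1 1] pwc_lincomb[OF assms(1,1), of 0 0] by (simp_all add: v_def)
  then have L2: "u \<in> L2ctrl T" "w \<in> L2ctrl T" "v \<in> L2ctrl T" "(\<lambda>_. 0) \<in> L2ctrl T"
    using assms(1,2) by (auto intro: pwc_in_L2ctrl)
  have "(\<lambda>t. s *\<^sub>R v t + (1 - s) *\<^sub>R u t) = (\<lambda>t. u t + s *\<^sub>R w t)"
    "(\<lambda>t. (1/2) *\<^sub>R v t + (1 - 1/2) *\<^sub>R 0) = (\<lambda>t. (1/2) *\<^sub>R u t + (1 - 1/2) *\<^sub>R w t)"
    by (simp_all add: v_def algebra_simps)
  then have "AE z in lborel. z \<in> obs_set T \<omega> \<longrightarrow> S (\<lambda>t. u t + s *\<^sub>R w t) z = s * S v z + (1 - s) * S u z"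
      "AE z in lborel. z \<in> obs_set T \<omega> \<longrightarrow> S (\<lambda>t. (1/2) *\<^sub>R u t + (1 - 1/2) *\<^sub>R w t) z = 1/2 * S v z + 1/2 * S (\<lambda>_. 0) z"
      "AE z in lborel. z \<in> obs_set T \<omega> \<longrightarrow> S (\<lambda>t. (1/2) *\<^sub>R u t + (1 - 1/2) *\<^sub>R w t) z = 1/2 * S u z + 1/2 * S w z"
    using S_affine[OF L2(3,1), of s] S_affine[OF L2(3,4), of "1/2"] S_affine[OF L2(1,2), of "1/2"] by auto
  then show ?thesis
  proof eventually_elim
    case (elim z)
    show ?case
    proof
      assume "z \<in> obs_set T \<omega>"
      with elim have "S v z = S u z + S w z - S (\<lambda>_. 0) z" by auto
      with elim \<open>z \<in> obs_set T \<omega>\<close> show "S (\<lambda>t. u t + s *\<^sub>R w t) z = S u z + s * lin_part S w z"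
        by (simp add: lin_part_def algebra_simps)
    qed
  qed
qed

lemma pwc_state_L2obs: "v \<in> pwc tg M \<Longrightarrow> S v \<in> L2obs T \<omega>"
  by (rule S_L2[OF pwc_in_L2ctrl])

lemma lin_part_L2obs:
  assumes "w \<in> pwc tg M"
  shows "lin_part S w \<in> L2obs T \<omega>"
proof -
  have "(\<lambda>_. 0) \<in> pwc tg M" using pwc_lincomb[OF assms assms, of 0 0] by simp
  then show ?thesis
    using L2obs_lincomb[OF pwc_state_L2obs[OF assms] pwc_state_L2obs \<omega>, of "\<lambda>_. 0" tg M 1 "-1"]
    by (simp add: lin_part_def)
qed

lemma tracking_perturbation:
  assumes yd: "yd \<in> L2obs T \<omega>" and u: "u \<in> pwc tg M" and w: "w \<in> pwc tg M"
  shows "obs_norm T \<omega> (\<lambda>z. S (\<lambda>t. u t + s *\<^sub>R w t) z - yd z)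
       = obs_norm T \<omega> (\<lambda>z. (S u z - yd z) + s * lin_part S w z)"
proof (rule obs_norm_cong_AE[OF \<omega>])
  have "(\<lambda>t. u t + s *\<^sub>R w t) \<in> pwc tg M" using pwc_lincomb[OF u w, of 1 s] by simp
  then show "(\<lambda>z. S (\<lambda>t. u t + s *\<^sub>R w t) z - yd z) \<in> borel_measurable lborel"
    using L2obs_borel_measurable[OF pwc_state_L2obs] L2obs_borel_measurable[OF yd] by simp
  show "(\<lambda>z. (S u z - yd z) + s * lin_part S w z) \<in> borel_measurable lborel"
    using L2obs_borel_measurable[OF pwc_state_L2obs[OF u]] L2obs_borel_measurable[OF yd]
      L2obs_borel_measurable[OF lin_part_L2obs[OF w]] by simp
  show "AE z in lborel. z \<in> obs_set T \<omega> \<longrightarrow>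
      S (\<lambda>t. u t + s *\<^sub>R w t) z - yd z = (S u z - yd z) + s * lin_part S w z"
    using state_perturbation[OF u w, of s] by (rule eventually_mono) simp
qed

lemma J_beta_symmetric_perturbation:
  assumes yd: "yd \<in> L2obs T \<omega>" and u: "u \<in> pwc tg M" and w: "w \<in> pwc tg M"
  shows "J_beta T \<omega> S yd \<alpha> \<beta> (\<lambda>t. u t + s *\<^sub>R w t) + J_beta T \<omega> S yd \<alpha> \<beta> (\<lambda>t. u t - s *\<^sub>R w t)
       = 2 * J_beta T \<omega> S yd \<alpha> \<beta> u
         + s\<^sup>2 * ((obs_norm T \<omega> (lin_part S w))\<^sup>2 + \<alpha> * (ctrl_norm T w)\<^sup>2)
         + \<beta> * (product_penalty T (\<lambda>t. u t + s *\<^sub>R w t) + product_penalty T (\<lambda>t. u t - s *\<^sub>R w t)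
                  - 2 * product_penalty T u)"
proof -
  have f: "(\<lambda>z. S u z - yd z) \<in> L2obs T \<omega>"
    using L2obs_lincomb[OF pwc_state_L2obs[OF u] yd \<omega>, of 1 "-1"] by simp
  have "obs_norm T \<omega> (\<lambda>z. S (\<lambda>t. u t - s *\<^sub>R w t) z - yd z)
      = obs_norm T \<omega> (\<lambda>z. (S u z - yd z) - s * lin_part S w z)"
    using tracking_perturbation[OF yd u w, of "- s"] by simp
  then show ?thesis
    unfolding J_beta_def product_penalty_def[symmetric] tracking_perturbation[OF yd u w]
    using obs_norm_parallelogram[OF f lin_part_L2obs[OF w] \<omega>, of s]
      arg_cong[where f="\<lambda>x. \<alpha> * x", OF ctrl_norm_parallelogram[OF u w, of T s]]
    by (simp add: algebra_simps)
qed

lemma J_beta_cell_perturbation_descent: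
  assumes S_bounded: "\<exists>C. \<forall>u\<in>L2ctrl T. obs_norm T \<omega> (lin_part S u) \<le> C * ctrl_norm T u"
    and yd: "yd \<in> L2obs T \<omega>"
    and \<beta>: "\<beta> > (op_norm T \<omega> (lin_part S))\<^sup>2 + \<alpha>"
    and grid: "tg 1 = 0" "tg M = T" "\<And>j. 1 \<le> j \<Longrightarrow> j < M \<Longrightarrow> tg j < tg (Suc j)"
    and u: "u \<in> pwc tg M" "\<forall>t\<in>grid_cell tg j. u t = (a, b)" and j: "j \<in> {1..<M}"
    and s: "0 < s" "s < \<bar>a\<bar>" "s < \<bar>b\<bar>"
  defines "w \<equiv> \<lambda>t. indicator (grid_cell tg j) t *\<^sub>R (1, - sgn (a * b))"
  shows "J_beta T \<omega> S yd \<alpha> \<beta> (\<lambda>t. u t + s *\<^sub>R w t) + J_beta T \<omega> S yd \<alpha> \<beta> (\<lambda>t. u t - s *\<^sub>R w t)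
       < 2 * J_beta T \<omega> S yd \<alpha> \<beta> u"
proof -
  have w: "w \<in> pwc tg M" unfolding w_def using j by (rule pwc_cell_indicator)
  have "a * b \<noteq> 0" using s by auto
  then have "(norm (1::real, - sgn (a * b)))\<^sup>2 = 2"
    by (simp add: norm_Pair sgn_if)
  moreover have "(ctrl_norm T w)\<^sup>2 = (norm (1::real, - sgn (a * b)))\<^sup>2 * (tg (Suc j) - tg j)"
    unfolding w_def by (rule ctrl_norm_cell_indicator[OF grid(3) grid(1,2) j])
  ultimately have "(ctrl_norm T w)\<^sup>2 = 2 * (tg (Suc j) - tg j)" by simp
  then have N_pos: "(ctrl_norm T w)\<^sup>2 > 0" using grid(3)[of j] j by simp
  have "obs_norm T \<omega> (lin_part S w) \<le> op_norm T \<omega> (lin_part S) * ctrl_norm T w"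
    using obs_norm_le_op_norm[OF S_bounded pwc_in_L2ctrl[OF w]] .
  then have "(obs_norm T \<omega> (lin_part S w))\<^sup>2 \<le> (op_norm T \<omega> (lin_part S))\<^sup>2 * (ctrl_norm T w)\<^sup>2"
    using obs_norm_nonneg by (metis power_mono power_mult_distrib)
  then have "(obs_norm T \<omega> (lin_part S w))\<^sup>2 + \<alpha> * (ctrl_norm T w)\<^sup>2 < \<beta> * (ctrl_norm T w)\<^sup>2"
    using \<beta> N_pos by (smt (verit, best) distrib_right mult_strict_right_mono)
  then have "s\<^sup>2 * ((obs_norm T \<omega> (lin_part S w))\<^sup>2 + \<alpha> * (ctrl_norm T w)\<^sup>2) < \<beta> * (s\<^sup>2 * (ctrl_norm T w)\<^sup>2)"
    using s(1) by simp
  moreover have "product_penalty T (\<lambda>t. u t + s *\<^sub>R w t) + product_penalty T (\<lambda>t. u t - s *\<^sub>R w t)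
      - 2 * product_penalty T u = - (s\<^sup>2 * (ctrl_norm T w)\<^sup>2)"
    using product_penalty_perturbation[OF u j less_imp_le[OF s(1)] s(2,3), of T]
    unfolding w_def by simp
  ultimately show ?thesis
    using J_beta_symmetric_perturbation[OF yd u(1) w, of \<alpha> \<beta> s] by simp
qed

end

theorem theorem3p3:
  fixes \<Omega> \<omega>obs :: "(real^'n::finite) set"
    and T \<alpha> \<beta> :: real
    and S :: "(real \<Rightarrow> real \<times> real) \<Rightarrow> (real \<times> (real^'n) \<Rightarrow> real)"
    and yd :: "real \<times> (real^'n) \<Rightarrow> real"
    and tg :: "nat \<Rightarrow> real" and M :: nat
    and ubar :: "real \<Rightarrow> real \<times> real"
  assumes dom: "open \<Omega>" "connected \<Omega>" "bounded \<Omega>"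
    and obs: "\<omega>obs \<subseteq> \<Omega>" "\<omega>obs \<in> sets lborel"
    and T: "T > 0"
    and grid: "M \<ge> 2" "tg 1 = 0" "tg M = T" "\<And>j. 1 \<le> j \<Longrightarrow> j < M \<Longrightarrow> tg j < tg (Suc j)"
    and S_L2: "\<And>u. u \<in> L2ctrl T \<Longrightarrow> S u \<in> L2obs T \<omega>obs"
    and S_affine: "\<And>u v a. u \<in> L2ctrl T \<Longrightarrow> v \<in> L2ctrl T \<Longrightarrow>
         AE z in lborel. z \<in> obs_set T \<omega>obs \<longrightarrow>
           S (\<lambda>t. a *\<^sub>R u t + (1 - a) *\<^sub>R v t) z = a * S u z + (1 - a) * S v z"
    and S_bounded: "\<exists>C. \<forall>u\<in>L2ctrl T. obs_norm T \<omega>obs (lin_part S u) \<le> C * ctrl_norm T u"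
    and yd: "yd \<in> L2obs T \<omega>obs"
    and \<alpha>: "\<alpha> > 0"
    and \<beta>: "\<beta> > (op_norm T \<omega>obs (lin_part S))\<^sup>2 + \<alpha>"
    and locmin: "local_min_on T (J_beta T \<omega>obs S yd \<alpha> \<beta>) (pwc tg M) ubar"
  shows "\<forall>t\<in>{0..T}. fst (ubar t) * snd (ubar t) = 0"
proof (rule ccontr)
  interpret affine_control_to_state T \<omega>obs S
    using obs(2) S_L2 S_affine by unfold_locales
  assume "\<not> ?thesis"
  then obtain a b t0 where ab: "ubar t0 = (a, b)" "a \<noteq> 0" "b \<noteq> 0"
    by (metis mult_eq_0_iff prod.collapse)
  have ubar: "ubar \<in> pwc tg M" using locmin unfolding local_min_on_def by blast
  obtain j where j: "j \<in> {1..<M}" "\<forall>t\<in>grid_cell tg j. ubar t = (a, b)"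
    using pwc_constant_on_cell[OF grid(4) ubar, of t0] ab by (auto simp: zero_prod_def)
  define w where "w = (\<lambda>t. indicator (grid_cell tg j) t *\<^sub>R (1::real, - sgn (a * b)))"
  have "w \<in> pwc tg M" unfolding w_def using j(1) by (rule pwc_cell_indicator)
  then obtain \<delta> where "\<delta> > 0" and near: "\<And>r. \<bar>r\<bar> < \<delta> \<Longrightarrow>
      J_beta T \<omega>obs S yd \<alpha> \<beta> ubar \<le> J_beta T \<omega>obs S yd \<alpha> \<beta> (\<lambda>t. ubar t + r *\<^sub>R w t)"
    using local_min_on_pwc_perturbation[OF locmin] by blast
  define s where "s = min (min \<bar>a\<bar> \<bar>b\<bar>) \<delta> / 2"
  have s: "0 < s" "s < \<bar>a\<bar>" "s < \<bar>b\<bar>" "s < \<delta>"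
    unfolding s_def using ab \<open>\<delta> > 0\<close> by auto
  have "J_beta T \<omega>obs S yd \<alpha> \<beta> (\<lambda>t. ubar t + s *\<^sub>R w t)
      + J_beta T \<omega>obs S yd \<alpha> \<beta> (\<lambda>t. ubar t - s *\<^sub>R w t) < 2 * J_beta T \<omega>obs S yd \<alpha> \<beta> ubar"
    unfolding w_def by (rule J_beta_cell_perturbation_descent[OF S_bounded yd \<beta> grid(2-4) ubar j(2) j(1) s(1-3)])
  then show False using near[of s] near[of "- s"] s by simp
qed

end
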